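(* Let $\sigma:\mathbb{R}\to\mathbb{R}$ be an increasing odd homeomorphism and let $A,S$ be Borel subsets of $\mathbb{R}_{\geq0}^2$ with $E_\sigma^{-1}(A)=A$. Then for every measure $\mu$ on $S$ that is $\{h_\sigma,v_\sigma\}$-invariant on $S$ and gives measure zero to the coordinate axes, the measure $\nu=1_{A\cap S}\,\mu$ is also $\{h_\sigma,v_\sigma\}$-invariant on $S$.
   Context: $h_\sigma(x,y)=(x+\sigma^{-1}(y),y)$, $v_\sigma(x,y)=(x,\sigma(x)+y)$. $E_\sigma:\mathbb{R}_{\geq0}^2\to\mathbb{R}_{\geq0}^2$ is $E_\sigma(x,y)=(x-\sigma^{-1}(y),y)$ if $y<\sigma(x)$ and $(x,y-\sigma(x))$ if $y\geq\sigma(x)$. A measure $\mu$ on the Borel subsets of $S$ is $\{h_\sigma,v_\sigma\}$-invariant on $S$ if for every Borel $B\subset S$ and $g\in\{h_\sigma,v_\sigma\}$ with $gB\subset S$, $\mu(gB)=\mu(B)$. *)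

theory Defs
  imports "HOL-Analysis.Analysis"
begin

definition quadrant :: "(real \<times> real) set" where
  "quadrant = {p. 0 \<le> fst p \<and> 0 \<le> snd p}"

definition hmap :: "(real \<Rightarrow> real) \<Rightarrow> real \<times> real \<Rightarrow> real \<times> real" where
  "hmap \<sigma> p = (fst p + inv \<sigma> (snd p), snd p)"

definition vmap :: "(real \<Rightarrow> real) \<Rightarrow> real \<times> real \<Rightarrow> real \<times> real" where
  "vmap \<sigma> p = (fst p, \<sigma> (fst p) + snd p)"

text \<open>E_sigma (meant as a map on the quadrant; formula extended to all points).\<close>
definition Emap :: "(real \<Rightarrow> real) \<Rightarrow> real \<times> real \<Rightarrow> real \<times> real" where
  "Emap \<sigma> p = (if snd p < \<sigma> (fst p) then (fst p - inv \<sigma> (snd p), snd p)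
               else (fst p, snd p - \<sigma> (fst p)))"

definition hv_invariant_on ::
  "(real \<Rightarrow> real) \<Rightarrow> (real \<times> real) set \<Rightarrow> (real \<times> real) measure \<Rightarrow> bool" where
  "hv_invariant_on \<sigma> S M \<longleftrightarrow>
     (\<forall>B \<in> sets M. \<forall>g \<in> {hmap \<sigma>, vmap \<sigma>}.
        g ` B \<subseteq> S \<longrightarrow> emeasure M (g ` B) = emeasure M B)"

end

theory Submission
  imports Defs
begin

text \<open>Since A is the trace on the quadrant of its preimage under E, and E inverts both h and v
  off the coordinate axes, a point of the quadrant off the axes lies in A exactly when its image
  under h or v does. Hence g(B) \<inter> A and g(B \<inter> A) differ at most by g(B \<inter> axes), which is
  \<mu>-null by invariance, and \<nu>(g B) = \<mu>(g B \<inter> A) = \<mu>(g (B \<inter> A)) = \<mu>(B \<inter> A) = \<nu>(B).\<close>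

lemma emeasure_density_indicator_image:
  assumes C: "C \<in> sets M" and Z: "Z \<in> null_sets M"
    and image_sets: "\<And>D. D \<in> sets M \<Longrightarrow> g ` D \<subseteq> space M \<Longrightarrow> g ` D \<in> sets M"
    and image_emeasure:
      "\<And>D. D \<in> sets M \<Longrightarrow> g ` D \<subseteq> space M \<Longrightarrow> emeasure M (g ` D) = emeasure M D"
    and C_invariant: "\<And>p. p \<in> space M - Z \<Longrightarrow> g p \<in> space M \<Longrightarrow> g p \<in> C \<longleftrightarrow> p \<in> C"
    and B: "B \<in> sets M" "g ` B \<subseteq> space M"
  shows "emeasure (density M (indicator C)) (g ` B) = emeasure (density M (indicator C)) B"
proof -
  have BZ: "B \<inter> Z \<in> sets M" and BC: "B \<inter> C \<in> sets M"
    using B(1) C null_setsD2[OF Z] by auto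
  have BZ_image: "g ` (B \<inter> Z) \<subseteq> space M" and BC_image: "g ` (B \<inter> C) \<subseteq> space M"
    using B(2) by auto
  have "emeasure M (g ` (B \<inter> Z)) = emeasure M (B \<inter> Z)"
    using image_emeasure[OF BZ BZ_image] .
  also have "\<dots> = 0"
    using null_sets_subset[OF Z BZ] by auto
  finally have "g ` (B \<inter> Z) \<in> null_sets M"
    using image_sets[OF BZ BZ_image] by (simp add: null_sets_def)
  moreover have "g p \<in> C \<longleftrightarrow> p \<in> C" if "p \<in> B - Z" for p
    using C_invariant[of p] that B sets.sets_into_space[OF B(1)] by blast
  then have "x \<notin> g ` (B \<inter> Z) \<Longrightarrow> x \<in> C \<inter> g ` B \<longleftrightarrow> x \<in> g ` (B \<inter> C)" for x
    by blast
  ultimately have "AE x in M. x \<in> C \<inter> g ` B \<longleftrightarrow> x \<in> g ` (B \<inter> C)"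
    by (auto dest: AE_not_in elim!: AE_mp)
  then have "emeasure M (C \<inter> g ` B) = emeasure M (g ` (B \<inter> C))"
    by (rule emeasure_eq_AE[OF _ sets.Int[OF C image_sets[OF B]] image_sets[OF BC BC_image]])
  also have "\<dots> = emeasure M (C \<inter> B)"
    using image_emeasure[OF BC BC_image] by (simp add: Int_commute)
  finally show ?thesis
    by (simp add: emeasure_restricted[OF C image_sets[OF B]] emeasure_restricted[OF C B(1)])
qed

lemma homeomorphism_image_borel:
  assumes "homeomorphism UNIV UNIV f f'" and "B \<in> sets borel"
  shows "f ` B \<in> sets borel"
proof -
  have inverse: "\<And>x. f' (f x) = x" "\<And>y. f (f' y) = y"
    using assms(1) by (auto simp: homeomorphism_def)
  have "f ` B = f' -` B"
  proof
    show "f ` B \<subseteq> f' -` B"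
      using inverse by auto
    show "f' -` B \<subseteq> f ` B"
      using inverse(2) by (metis image_eqI subsetI vimageD)
  qed
  moreover have "f' \<in> borel_measurable borel"
    using assms(1) by (intro borel_measurable_continuous_onI) (simp add: homeomorphism_def)
  ultimately show ?thesis
    using measurable_sets[of f' borel borel B] assms(2) by simp
qed

lemma homeomorphism_hmap:
  assumes "homeomorphism UNIV UNIV \<sigma> \<tau>"
  shows "homeomorphism UNIV UNIV (hmap \<sigma>) (\<lambda>p. (fst p - \<tau> (snd p), snd p))"
proof -
  have \<tau>: "\<And>x. \<tau> (\<sigma> x) = x" "\<And>y. \<sigma> (\<tau> y) = y" "continuous_on UNIV \<tau>"
    using assms unfolding homeomorphism_def by auto
  then have "inv \<sigma> = \<tau>"
    by (intro inv_equality)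
  moreover have "continuous_on UNIV (\<lambda>p::real \<times> real. \<tau> (snd p))"
    by (rule continuous_on_compose2[OF \<tau>(3) continuous_on_snd[OF continuous_on_id]]) simp
  ultimately show ?thesis
    unfolding hmap_def using \<tau>(1,2) by (intro homeomorphismI continuous_intros) auto
qed

lemma homeomorphism_vmap:
  assumes "continuous_on UNIV \<sigma>"
  shows "homeomorphism UNIV UNIV (vmap \<sigma>) (\<lambda>p. (fst p, snd p - \<sigma> (fst p)))"
proof -
  have "continuous_on UNIV (\<lambda>p::real \<times> real. \<sigma> (fst p))"
    by (rule continuous_on_compose2[OF assms continuous_on_fst[OF continuous_on_id]]) simp
  then show ?thesis
    unfolding vmap_def by (intro homeomorphismI continuous_intros) auto
qed

lemma hv_image_borel:
  assumes "homeomorphism UNIV UNIV \<sigma> \<tau>" and "g \<in> {hmap \<sigma>, vmap \<sigma>}" and "C \<in> sets borel"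
  shows "g ` C \<in> sets borel"
proof -
  have "continuous_on UNIV \<sigma>"
    using assms(1) by (simp add: homeomorphism_def)
  then show ?thesis
    using assms(2) homeomorphism_image_borel[OF homeomorphism_hmap[OF assms(1)] assms(3)]
      homeomorphism_image_borel[OF homeomorphism_vmap assms(3)] by auto
qed

lemma Emap_hmap:
  assumes "strict_mono \<sigma>" and "surj \<sigma>" and "0 < fst p"
  shows "Emap \<sigma> (hmap \<sigma> p) = p"
proof -
  have "snd p = \<sigma> (inv \<sigma> (snd p))"
    using assms(2) by (simp add: surj_f_inv_f)
  also have "\<dots> < \<sigma> (fst p + inv \<sigma> (snd p))"
    using assms(1,3) by (simp add: strict_mono_less)
  finally show ?thesis
    unfolding Emap_def hmap_def by simp
qed

lemma Emap_vmap:
  assumes "0 \<le> snd p"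
  shows "Emap \<sigma> (vmap \<sigma> p) = p"
  using assms unfolding Emap_def vmap_def by simp

lemma hv_invariant_on_density_indicator:
  assumes sets_M: "sets M = sets (restrict_space borel S)" and S: "S \<in> sets borel"
    and \<tau>: "homeomorphism UNIV UNIV \<sigma> \<tau>" and invariant: "hv_invariant_on \<sigma> S M"
    and C: "C \<in> sets M" and Z: "Z \<in> null_sets M"
    and C_invariant: "\<And>g p. g \<in> {hmap \<sigma>, vmap \<sigma>} \<Longrightarrow> p \<in> S - Z \<Longrightarrow> g p \<in> S \<Longrightarrow>
      g p \<in> C \<longleftrightarrow> p \<in> C"
  shows "hv_invariant_on \<sigma> S (density M (indicator C))"
  unfolding hv_invariant_on_def sets_density
proof (intro ballI impI)
  fix B g
  assume B: "B \<in> sets M" and g: "g \<in> {hmap \<sigma>, vmap \<sigma>}" and gB: "g ` B \<subseteq> S"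
  have space_M: "space M = S"
    using sets_eq_imp_space_eq[OF sets_M] by (simp add: space_restrict_space)
  have in_sets_M: "X \<in> sets M \<longleftrightarrow> X \<in> sets borel \<and> X \<subseteq> S" for X
    unfolding sets_M using S by (subst sets_restrict_space_iff) auto
  show "emeasure (density M (indicator C)) (g ` B) = emeasure (density M (indicator C)) B"
  proof (rule emeasure_density_indicator_image[OF C Z])
    show "\<And>D. D \<in> sets M \<Longrightarrow> g ` D \<subseteq> space M \<Longrightarrow> g ` D \<in> sets M"
      using hv_image_borel[OF \<tau> g] in_sets_M space_M by simp
    show "\<And>D. D \<in> sets M \<Longrightarrow> g ` D \<subseteq> space M \<Longrightarrow> emeasure M (g ` D) = emeasure M D"
      using invariant g space_M unfolding hv_invariant_on_def by blast
  qed (use C_invariant[OF g] B gB space_M in simp_all)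
qed

lemma Emap_invariant_image_iff:
  assumes "strict_mono \<sigma>" and "surj \<sigma>" and A: "Emap \<sigma> -` A \<inter> quadrant = A"
    and g: "g \<in> {hmap \<sigma>, vmap \<sigma>}" and p: "0 < fst p" "0 \<le> snd p" and gp: "g p \<in> quadrant"
  shows "g p \<in> A \<longleftrightarrow> p \<in> A"
proof -
  have "Emap \<sigma> (g p) = p"
    using g Emap_hmap[OF assms(1,2) p(1)] Emap_vmap[OF p(2)] by blast
  moreover have "g p \<in> A \<longleftrightarrow> Emap \<sigma> (g p) \<in> A"
    using gp A by blast
  ultimately show ?thesis
    by simp
qed

lemma axes_borel: "{p::real \<times> real. fst p = 0 \<or> snd p = 0} \<in> sets borel"
proof -
  have "closed {p::real \<times> real. fst p = 0 \<or> snd p = 0}"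
    by (intro closed_Collect_disj closed_Collect_eq continuous_intros)
  then show ?thesis
    by simp
qed

theorem lemma10:
  fixes \<sigma> :: "real \<Rightarrow> real"
    and A S :: "(real \<times> real) set"
  assumes "strict_mono \<sigma>"
    and "\<And>x. \<sigma> (- x) = - \<sigma> x"
    and "\<exists>g. homeomorphism UNIV UNIV \<sigma> g"
    and "A \<in> sets borel" and "A \<subseteq> quadrant"
    and "S \<in> sets borel" and "S \<subseteq> quadrant"
    and "Emap \<sigma> -` A \<inter> quadrant = A"
  shows "\<forall>M. sets M = sets (restrict_space borel S)
           \<longrightarrow> hv_invariant_on \<sigma> S M
           \<longrightarrow> emeasure M {p \<in> S. fst p = 0 \<or> snd p = 0} = 0
           \<longrightarrow> hv_invariant_on \<sigma> S (density M (indicator (A \<inter> S)))"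
proof (intro allI impI)
  fix M :: "(real \<times> real) measure"
  assume sets_M: "sets M = sets (restrict_space borel S)"
    and invariant: "hv_invariant_on \<sigma> S M"
    and axes_null: "emeasure M {p \<in> S. fst p = 0 \<or> snd p = 0} = 0"
  obtain \<tau> where \<tau>: "homeomorphism UNIV UNIV \<sigma> \<tau>"
    using assms(3) by blast
  have surj: "surj \<sigma>"
    using \<tau> by (simp add: homeomorphism_def)
  have "S \<inter> {p. fst p = 0 \<or> snd p = 0} \<in> sets M"
    unfolding sets_M using assms(6) axes_borel by (subst sets_restrict_space_iff) auto
  then have axes: "{p \<in> S. fst p = 0 \<or> snd p = 0} \<in> null_sets M"
    using axes_null by (simp add: null_sets_def Int_def)
  have "A \<inter> S \<in> sets M"
    unfolding sets_M using assms(4,6) by (subst sets_restrict_space_iff) auto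
  then show "hv_invariant_on \<sigma> S (density M (indicator (A \<inter> S)))"
  proof (rule hv_invariant_on_density_indicator[OF sets_M assms(6) \<tau> invariant _ axes])
    fix g p
    assume g: "g \<in> {hmap \<sigma>, vmap \<sigma>}" and p: "p \<in> S - {p \<in> S. fst p = 0 \<or> snd p = 0}"
      and gp: "g p \<in> S"
    have "0 < fst p" and "0 \<le> snd p"
      using p assms(7) by (auto simp: quadrant_def)
    then show "g p \<in> A \<inter> S \<longleftrightarrow> p \<in> A \<inter> S"
      using Emap_invariant_image_iff[OF assms(1) surj assms(8) g] gp p assms(7) by blast
  qed
qed

end
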